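(* Let $k$ be a field, $Q,q\in k^\times$, $n,d\ge1$. Every eigenvalue of $c_K=\prod_{i=1}^dK_i$, where $K_i=T_{i-1}\cdots T_1T_0T_1\cdots T_{i-1}$, acting on $V_n^{\otimes d}$ is of the form $\pm Q^{a}q^{b}$ for some $a,b\in\mathbb Z$.
   Context: $\mathcal H^B_{Q,q}(d)$ is the $k$-algebra generated by $T_0,\dots,T_{d-1}$ with relations $(T_0+Q)(T_0-Q^{-1})=0$; $(T_i+q)(T_i-q^{-1})=0$ ($i>0$); $T_iT_{i+1}T_i=T_{i+1}T_iT_{i+1}$ ($i>0$); $T_0T_1T_0T_1=T_1T_0T_1T_0$; $T_iT_j=T_jT_i$ ($|i-j|>1$); the $K_i$ pairwise commute. For $n=2r$ let $\mathbb I_n=\{-\tfrac{2r-1}{2},\dots,-\tfrac12,\tfrac12,\dots,\tfrac{2r-1}{2}\}$ and for $n=2r+1$ let $\mathbb I_n=\{-r,\dots,r\}$; $V_n$ has basis $\{v_i:i\in\mathbb I_n\}$. $R_q(v_i\otimes v_j)=q^{-1}v_i\otimes v_j$ if $i=j$, $v_j\otimes v_i$ if $i<j$, $v_j\otimes v_i+(q^{-1}-q)v_i\otimes v_j$ if $i>j$; $K_Q(v_i)=Q^{-1}v_i$ if $i=0$, $v_{-i}$ if $i>0$, $v_{-i}+(Q^{-1}-Q)v_i$ if $i<0$. The algebra acts on $V_n^{\otimes d}$ from the right: $T_i$ ($i>0$) by $R_q$ on factors $i,i+1$, $T_0$ by $K_Q$ on the first factor. *)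

theory Defs
  imports Main
begin

text \<open>Index set I_n encoded by doubling: the index i in I_n is represented by the
integer 2i. For n = 2r this gives the odd integers -(2r-1),...,2r-1; for n = 2r+1 the even
integers -2r,...,2r. The encoding preserves order, sign and the index 0.\<close>
definition idx_set :: "nat \<Rightarrow> int set" where
  "idx_set n = {j. \<bar>j\<bar> \<le> int n - 1 \<and> (j - (int n - 1)) mod 2 = 0}"

text \<open>Basis of V_n^{\<otimes>d}: words v_{w_1} \<otimes> ... \<otimes> v_{w_d}.\<close>
definition words :: "nat \<Rightarrow> nat \<Rightarrow> int list set" where
  "words n d = {w. length w = d \<and> set w \<subseteq> idx_set n}"

text \<open>Vectors of V_n^{\<otimes>d}: coefficient functions supported on the basis words.\<close>
definition tensor_space :: "nat \<Rightarrow> nat \<Rightarrow> (int list \<Rightarrow> 'k::field) set" where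
  "tensor_space n d = {v. \<forall>w. w \<notin> words n d \<longrightarrow> v w = 0}"

definition delta :: "int list \<Rightarrow> int list \<Rightarrow> 'k::field" where
  "delta w u = (if u = w then 1 else 0)"

definition swap_at :: "nat \<Rightarrow> int list \<Rightarrow> int list" where
  "swap_at i w = w[i - 1 := w ! i, i := w ! (i - 1)]"

text \<open>Image of the basis word w under the generator T_j (right action):
T_0 acts by K_Q on the first factor, T_i (i>0) by R_q on factors i, i+1.\<close>
definition gen_basis :: "'k::field \<Rightarrow> 'k \<Rightarrow> nat \<Rightarrow> int list \<Rightarrow> int list \<Rightarrow> 'k" where
  "gen_basis Q q j w =
     (if j = 0 then
        (let a = w ! 0 in
         if a = 0 then (\<lambda>u. inverse Q * delta w u)
         else if a > 0 then delta (w[0 := - a])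
         else (\<lambda>u. delta (w[0 := - a]) u + (inverse Q - Q) * delta w u))
      else
        (let a = w ! (j - 1); b = w ! j in
         if a = b then (\<lambda>u. inverse q * delta w u)
         else if a < b then delta (swap_at j w)
         else (\<lambda>u. delta (swap_at j w) u + (inverse q - q) * delta w u)))"

definition gen_act :: "nat \<Rightarrow> nat \<Rightarrow> 'k::field \<Rightarrow> 'k \<Rightarrow> nat \<Rightarrow> (int list \<Rightarrow> 'k) \<Rightarrow> (int list \<Rightarrow> 'k)" where
  "gen_act n d Q q j v = (\<lambda>u. \<Sum>w\<in>words n d. v w * gen_basis Q q j w u)"

definition word_act :: "nat \<Rightarrow> nat \<Rightarrow> 'k::field \<Rightarrow> 'k \<Rightarrow> nat list \<Rightarrow> (int list \<Rightarrow> 'k) \<Rightarrow> (int list \<Rightarrow> 'k)" where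
  "word_act n d Q q js v = fold (gen_act n d Q q) js v"

definition K_word :: "nat \<Rightarrow> nat list" where
  "K_word i = rev [1..<i] @ 0 # [1..<i]"

definition cK_word :: "nat \<Rightarrow> nat list" where
  "cK_word d = concat (map K_word [1..<d+1])"

definition cK_act :: "nat \<Rightarrow> nat \<Rightarrow> 'k::field \<Rightarrow> 'k \<Rightarrow> (int list \<Rightarrow> 'k) \<Rightarrow> (int list \<Rightarrow> 'k)" where
  "cK_act n d Q q v = word_act n d Q q (cK_word d) v"

end

theory Submission
  imports Defs "HOL-Library.Function_Algebras"
begin

text \<open>
  The Jucys--Murphy elements \<open>K\<^sub>1, \<dots>, K\<^sub>d\<close> commute, and \<open>K\<^sub>1 = T\<^sub>0\<close> is annihilated by
  \<open>(X - Q\<^sup>-\<^sup>1)(X + Q)\<close>. Since \<open>K\<^sub>i\<^sub>+\<^sub>1 = T\<^sub>i K\<^sub>i T\<^sub>i\<close> with \<open>T\<^sub>i\<^sup>2 = (q\<^sup>-\<^sup>1 - q) T\<^sub>i + 1\<close>, a split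
  polynomial \<open>P\<close> with \<open>P(K\<^sub>i) = 0\<close> yields one for \<open>K\<^sub>i\<^sub>+\<^sub>1\<close>: with
  \<open>R = (K\<^sub>i - K\<^sub>i\<^sub>+\<^sub>1)\<^sup>2 - (q\<^sup>-\<^sup>1 - q)\<^sup>2 K\<^sub>i K\<^sub>i\<^sub>+\<^sub>1\<close> one gets \<open>P(K\<^sub>i\<^sub>+\<^sub>1) R = 0\<close>, and
  \<open>(K\<^sub>i\<^sub>+\<^sub>1 - \<rho> q\<^sup>-\<^sup>2)(K\<^sub>i\<^sub>+\<^sub>1 - \<rho> q\<^sup>2) \<equiv> R\<close> modulo \<open>K\<^sub>i - \<rho>\<close>, so multiplying the roots of \<open>P\<close> by
  \<open>q\<^sup>\<plusminus>\<^sup>2\<close> gives the new roots. Hence all roots lie in \<open>{\<plusminus>Q\<^sup>a q\<^sup>b}\<close>. As the \<open>K\<^sub>i\<close> commute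
  with each other and with \<open>c\<^sub>K\<close>, an eigenspace of \<open>c\<^sub>K\<close> contains a common eigenvector of all
  \<open>K\<^sub>i\<close>, so the eigenvalue of \<open>c\<^sub>K\<close> is a product of such roots. The Hecke relations for the
  operators on \<open>V\<^sub>n\<^sup>\<otimes>\<^sup>d\<close> are checked on basis words.
\<close>

section \<open>Annihilating polynomials under conjugation by a quadratic element\<close>

definition scaled_roots :: "'k::field \<Rightarrow> 'k list \<Rightarrow> 'k list" where
  "scaled_roots q ps = concat (map (\<lambda>a. [a / q\<^sup>2, a * q\<^sup>2]) ps)"

definition conj_roots :: "'k::field \<Rightarrow> 'k list \<Rightarrow> 'k list" where
  "conj_roots q ps = ps @ scaled_roots q ps"

locale algebra_over_field =
  fixes sc :: "'k::field \<Rightarrow> 'a::ring_1"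
  assumes sc_add: "sc (a + b) = sc a + sc b"
    and sc_mult: "sc (a * b) = sc a * sc b"
    and sc_one: "sc 1 = 1"
    and sc_central: "sc a * X = X * sc a"
begin

lemma sc_zero: "sc 0 = 0"
  using sc_add[of 0 0] by simp

lemma sc_uminus: "sc (- a) = - sc a"
  using sc_add[of a "- a"] by (simp add: sc_zero add_eq_0_iff2)

lemma sc_diff: "sc (a - b) = sc a - sc b"
  using sc_add[of a "- b"] by (simp add: sc_uminus)

lemma sc_commute_right: "X * sc a = sc a * X"
  by (rule sc_central[symmetric])

lemma sc_two: "sc 2 = 2"
  by (metis one_add_one sc_add sc_one)

lemma sc_central_left: "X * (sc a * Y) = sc a * (X * Y)"
  by (metis mult.assoc sc_central)

lemma sc_mult_left: "sc a * (sc b * Y) = sc (a * b) * Y"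
  by (simp add: sc_mult mult.assoc)

definition root_prod :: "'a \<Rightarrow> 'k list \<Rightarrow> 'a" where
  "root_prod X ps = (\<Prod>a\<leftarrow>ps. X - sc a)"

lemma root_prod_Nil [simp]: "root_prod X [] = 1"
  by (simp add: root_prod_def)

lemma root_prod_Cons [simp]: "root_prod X (a # ps) = (X - sc a) * root_prod X ps"
  by (simp add: root_prod_def)

lemma root_prod_append: "root_prod X (ps @ qs) = root_prod X ps * root_prod X qs"
  by (simp add: root_prod_def)

lemma root_prod_quadratic:
  assumes "X * X = sc (inverse c - c) * X + 1" and "c \<noteq> 0"
  shows "root_prod X [inverse c, - c] = 0"
proof -
  have "root_prod X [inverse c, - c] = X * X - sc (inverse c - c) * X - sc (inverse c * c)"
    by (simp add: algebra_simps sc_diff sc_uminus sc_mult sc_central[of _ X]) (metis sc_central)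
  then show ?thesis
    using assms by (simp add: sc_one)
qed

inductive_set subalgebra_gen :: "'a \<Rightarrow> 'a \<Rightarrow> 'a set" for A B where
  gen_left: "A \<in> subalgebra_gen A B"
| gen_right: "B \<in> subalgebra_gen A B"
| scalar: "sc c \<in> subalgebra_gen A B"
| add: "X \<in> subalgebra_gen A B \<Longrightarrow> Y \<in> subalgebra_gen A B \<Longrightarrow> X + Y \<in> subalgebra_gen A B"
| diff: "X \<in> subalgebra_gen A B \<Longrightarrow> Y \<in> subalgebra_gen A B \<Longrightarrow> X - Y \<in> subalgebra_gen A B"
| mult: "X \<in> subalgebra_gen A B \<Longrightarrow> Y \<in> subalgebra_gen A B \<Longrightarrow> X * Y \<in> subalgebra_gen A B"

lemma subalgebra_gen_commute_with:
  assumes "A * Y = Y * A" and "B * Y = Y * B" and "X \<in> subalgebra_gen A B"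
  shows "X * Y = Y * X"
  using assms(3)
proof (induction rule: subalgebra_gen.induct)
  case (scalar c)
  then show ?case by (rule sc_central)
next
  case (mult X Z)
  then show ?case by (metis mult.assoc)
qed (use assms in \<open>simp_all add: algebra_simps\<close>)

lemma subalgebra_gen_commute:
  assumes AB: "A * B = B * A" and "X \<in> subalgebra_gen A B" and "Y \<in> subalgebra_gen A B"
  shows "X * Y = Y * X"
proof -
  have "A * Z = Z * A" and "B * Z = Z * B" if "Z \<in> subalgebra_gen A B" for Z
    using subalgebra_gen_commute_with[OF _ _ that] AB by simp_all
  then show ?thesis
    using subalgebra_gen_commute_with assms(2,3) by blast
qed

lemma root_prod_in_subalgebra_gen:
  "root_prod A ps \<in> subalgebra_gen A B" "root_prod B ps \<in> subalgebra_gen A B"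
  by (induction ps) (auto intro: subalgebra_gen.intros simp flip: sc_one)

lemma quadratic_conj_left:
  assumes TAT: "T * A * T = B" and TT: "T * T = sc x * T + 1"
  shows "T * A = B * T - sc x * B"
proof -
  have "T * A = T * A * (T * T - sc x * T)"
    by (simp add: TT)
  also have "\<dots> = (T * A * T) * T - sc x * (T * A * T)"
    by (simp add: right_diff_distrib mult.assoc sc_central_left)
  finally show ?thesis
    using TAT by simp
qed

lemma quadratic_conj_right:
  assumes TAT: "T * A * T = B" and TT: "T * T = sc x * T + 1"
  shows "T * B = sc x * B + A * T"
proof -
  have "T * B = (T * T) * A * T"
    using TAT by (simp add: mult.assoc)
  also have "\<dots> = sc x * (T * A * T) + A * T"
    by (simp add: TT algebra_simps sc_central_left)
  finally show ?thesis
    using TAT by simp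
qed

lemma root_prod_conj_commutator:
  assumes AB: "A * B = B * A" and TA: "T * A = B * T - sc x * B"
  shows "\<exists>C. T * root_prod A ps = root_prod B ps * T + C \<and>
    C * (A - B) = - (sc x * B * (root_prod A ps - root_prod B ps))"
proof (induction ps)
  case Nil
  show ?case by simp
next
  case (Cons a ps)
  then obtain C where C1: "T * root_prod A ps = root_prod B ps * T + C"
    and C2: "C * (A - B) = - (sc x * B * (root_prod A ps - root_prod B ps))"
    by blast
  define PA where "PA = root_prod A ps"
  define PB where "PB = root_prod B ps"
  have PA_A: "PA * A = A * PA" and PA_B: "PA * B = B * PA"
    unfolding PA_def
    by (intro subalgebra_gen_commute[OF AB] root_prod_in_subalgebra_gen subalgebra_gen.intros)+
  define C' where "C' = (B - sc a) * C - sc x * B * PA"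
  have "T * root_prod A (a # ps) = (T * A - sc a * T) * PA"
    by (simp add: PA_def algebra_simps sc_central_left)
  also have "\<dots> = (B - sc a) * (T * PA) - sc x * B * PA"
    by (simp add: TA algebra_simps sc_central_left)
  also have "\<dots> = root_prod B (a # ps) * T + C'"
    by (simp add: C1[folded PA_def PB_def] C'_def PB_def algebra_simps)
  finally have shift: "T * root_prod A (a # ps) = root_prod B (a # ps) * T + C'" .
  have comm: "(B - sc a) * (sc x * B) = sc x * B * (B - sc a)"
    by (intro subalgebra_gen_commute[OF AB] subalgebra_gen.intros)
  have "C' * (A - B) = (B - sc a) * (C * (A - B)) - sc x * B * (PA * (A - B))"
    by (simp add: C'_def algebra_simps)
  also have "\<dots> = - ((B - sc a) * (sc x * B) * (PA - PB)) - sc x * B * (PA * (A - B))"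
    by (simp add: C2[folded PA_def PB_def] mult.assoc)
  also have "\<dots> = - (sc x * B * ((B - sc a) * (PA - PB) + PA * (A - B)))"
    by (simp only: comm) (simp add: algebra_simps)
  also have "(B - sc a) * (PA - PB) + PA * (A - B) = (A - sc a) * PA - (B - sc a) * PB"
    by (simp add: algebra_simps PA_A PA_B sc_commute_right[of PA])
  finally have "C' * (A - B) = - (sc x * B * (root_prod A (a # ps) - root_prod B (a # ps)))"
    by (simp add: PA_def PB_def)
  with shift show ?case by blast
qed

lemma root_prod_conj_annihilates_R:
  assumes AB: "A * B = B * A" and TAT: "T * A * T = B" and TT: "T * T = sc x * T + 1"
    and PA0: "root_prod A ps = 0"
  shows "root_prod B ps * ((A - B) * (A - B) - sc (x * x) * (A * B)) = 0"
proof -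
  have TA: "T * A = B * T - sc x * B"
    by (rule quadratic_conj_left[OF TAT TT])
  have TB: "T * B = sc x * B + A * T"
    by (rule quadratic_conj_right[OF TAT TT])
  define PB where "PB = root_prod B ps"
  obtain C where C1: "PB * T = - C" and C2: "C * (A - B) = sc x * B * PB"
    using root_prod_conj_commutator[OF AB TA, of ps] PA0
    by (auto simp: PB_def eq_neg_iff_add_eq_0)
  have PB_A: "PB * A = A * PB" and PB_B: "PB * B = B * PB"
    unfolding PB_def
    by (intro subalgebra_gen_commute[OF AB] root_prod_in_subalgebra_gen subalgebra_gen.intros)+
  txt \<open>\<open>G T\<close> is a multiple of \<open>P(B)\<close>; multiplying by \<open>T\<close> and using \<open>T\<^sup>2 = x T + 1\<close>
    eliminates \<open>T\<close> from \<open>G\<close>.\<close>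
  define G where "G = PB * (B - A)"
  have "G * T - sc x * (B * PB) - sc x * (B * PB) = PB * ((B - A) * T - sc x * B - sc x * B)"
    unfolding PB_B[symmetric] G_def
    by (simp add: right_diff_distrib left_diff_distrib mult.assoc sc_central_left[of PB])
  also have "(B - A) * T - sc x * B - sc x * B = T * (A - B)"
    by (simp add: right_diff_distrib TA TB algebra_simps)
  also have "PB * (T * (A - B)) = - (sc x * (B * PB))"
    by (simp add: mult.assoc[symmetric] C1 C2)
  finally have GT: "G * T = sc x * (B * PB)"
    by (simp add: algebra_simps)
  have "G * (sc x * T + 1) = G * T * T"
    by (simp add: TT mult.assoc)
  also have "\<dots> = - (sc x * (B * C))"
    by (simp add: GT mult.assoc C1)
  finally have G: "G = - (sc x * (B * C)) - sc x * (sc x * (B * PB))"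
    by (simp add: distrib_left sc_central_left[of G] GT algebra_simps)
  have "G * (A - B) = - (sc x * (B * (C * (A - B)))) - sc x * (sc x * (B * (PB * (A - B))))"
    by (simp only: G left_diff_distrib minus_mult_left mult.assoc sc_central_left[of B])
  also have "\<dots> = - (sc x * (sc x * (B * (PB * A))))"
    by (simp add: C2 mult.assoc) (simp add: algebra_simps PB_B sc_central_left[of B])
  also have "\<dots> = - (sc (x * x) * (PB * (A * B)))"
    using AB PB_B by (metis mult.assoc sc_mult_left)
  finally show ?thesis
    by (simp add: G_def PB_def[symmetric] algebra_simps sc_central_left[of PB] sc_central[of _ PB])
qed

lemma quadratic_factor_identity:
  assumes AB: "A * B = B * A" and q: "q \<noteq> 0" and x: "x = inverse q - q"
  shows "(B - sc (a / q\<^sup>2)) * (B - sc (a * q\<^sup>2)) =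
    ((A - B) * (A - B) - sc (x * x) * (A * B)) - (A - sc a) * (A + sc a - sc (2 + x * x) * B)"
proof -
  have L: "(B - sc u) * (B - sc v) = B * B - sc (u + v) * B + sc (u * v)" for u v
    by (simp add: algebra_simps sc_add sc_mult sc_commute_right[of B])
  have R: "(A - B) * (A - B) - sc s * (A * B) = A * A - sc (2 + s) * (A * B) + B * B" for s
    by (simp add: algebra_simps sc_add sc_two mult_2 AB)
  have S: "(A - sc a) * (A + sc a - sc s * B) =
      A * A - sc (a * a) - sc s * (A * B) + sc (a * s) * B" for s
    by (simp add: algebra_simps sc_mult sc_commute_right[of A] sc_central_left[of A])
  have "a / q\<^sup>2 + a * q\<^sup>2 = a * (2 + x * x)" and "a / q\<^sup>2 * (a * q\<^sup>2) = a * a"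
    using q unfolding x by (simp_all add: field_simps power2_eq_square)
  then show ?thesis
    unfolding L R S by (simp add: algebra_simps)
qed

lemma root_prod_scaled_roots_decomp:
  assumes AB: "A * B = B * A" and q: "q \<noteq> 0" and x: "x = inverse q - q"
  shows "\<exists>Y Z. root_prod B (scaled_roots q ps) =
    root_prod A ps * Y + ((A - B) * (A - B) - sc (x * x) * (A * B)) * Z"
proof (induction ps)
  case Nil
  show ?case
    by (rule exI[of _ 1], rule exI[of _ 0]) (simp add: scaled_roots_def)
next
  case (Cons a ps)
  define R where "R = (A - B) * (A - B) - sc (x * x) * (A * B)"
  define S where "S = A + sc a - sc (2 + x * x) * B"
  define D where "D = A - sc a"
  define PA where "PA = root_prod A ps"
  obtain Y Z where YZ: "root_prod B (scaled_roots q ps) = PA * Y + R * Z"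
    using Cons unfolding R_def PA_def by blast
  have R: "R \<in> subalgebra_gen A B" and S: "S \<in> subalgebra_gen A B" and D: "D \<in> subalgebra_gen A B"
    unfolding R_def S_def D_def by (intro subalgebra_gen.intros)+
  have "S * PA = PA * S"
    unfolding PA_def by (intro subalgebra_gen_commute[OF AB S] root_prod_in_subalgebra_gen)
  then have S_PA: "S * (PA * Y) = PA * (S * Y)"
    by (metis mult.assoc)
  have "(D * S) * R = R * (D * S)"
    by (intro subalgebra_gen_commute[OF AB] subalgebra_gen.mult D S R)
  then have DS_R: "D * (S * (R * Z)) = R * (D * (S * Z))"
    by (metis mult.assoc)
  have "root_prod B (scaled_roots q (a # ps)) =
      (B - sc (a / q\<^sup>2)) * (B - sc (a * q\<^sup>2)) * root_prod B (scaled_roots q ps)"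
    by (simp add: scaled_roots_def root_prod_append mult.assoc)
  also have "\<dots> = (R - D * S) * (PA * Y + R * Z)"
    unfolding quadratic_factor_identity[OF AB q x] YZ R_def S_def D_def ..
  also have "\<dots> = D * PA * (- (S * Y)) + R * (PA * Y + R * Z - D * (S * Z))"
    by (simp add: algebra_simps S_PA DS_R)
  finally show ?case
    unfolding D_def PA_def R_def root_prod_Cons by blast
qed

lemma root_prod_conj_annihilates:
  assumes AB: "A * B = B * A" and TAT: "T * A * T = B"
    and TT: "T * T = sc (inverse q - q) * T + 1" and q: "q \<noteq> 0"
    and PA0: "root_prod A ps = 0"
  shows "root_prod B (conj_roots q ps) = 0"
proof -
  define x where "x = inverse q - q"
  define R where "R = (A - B) * (A - B) - sc (x * x) * (A * B)"
  have "root_prod B ps * R = 0"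
    unfolding R_def by (rule root_prod_conj_annihilates_R[OF AB TAT TT[folded x_def] PA0])
  moreover obtain Y Z where "root_prod B (scaled_roots q ps) = R * Z"
    using root_prod_scaled_roots_decomp[OF AB q x_def, of ps] PA0 unfolding R_def by auto
  ultimately show ?thesis
    by (simp add: conj_roots_def root_prod_append mult.assoc[symmetric])
qed

end

lemma commute_prod_list:
  fixes x :: "'a::monoid_mult"
  assumes "\<And>y. y \<in> set ys \<Longrightarrow> x * y = y * x"
  shows "x * prod_list ys = prod_list ys * x"
  using assms
proof (induction ys)
  case (Cons y ys)
  then show ?case by (metis list.set_intros mult.assoc prod_list.Cons)
qed simp

section \<open>Jucys--Murphy elements of a type B Hecke algebra representation\<close>

definition signed_monomials :: "'k::field \<Rightarrow> 'k \<Rightarrow> 'k set" where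
  "signed_monomials Q q = {z. \<exists>a b::int. z = Q powi a * q powi b \<or> z = - (Q powi a * q powi b)}"

lemma signed_monomialsI:
  "Q powi a * q powi b \<in> signed_monomials Q q" "- (Q powi a * q powi b) \<in> signed_monomials Q q"
  unfolding signed_monomials_def by blast+

lemma signed_monomials_mult:
  assumes Q: "Q \<noteq> 0" and q: "q \<noteq> 0"
    and "x \<in> signed_monomials Q q" and "y \<in> signed_monomials Q q"
  shows "x * y \<in> signed_monomials Q q"
proof -
  obtain a b c e where x: "x = Q powi a * q powi b \<or> x = - (Q powi a * q powi b)"
    and y: "y = Q powi c * q powi e \<or> y = - (Q powi c * q powi e)"
    using assms(3,4) unfolding signed_monomials_def by blast
  have "(Q powi a * q powi b) * (Q powi c * q powi e) = Q powi (a + c) * q powi (b + e)"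
    using Q q by (simp add: power_int_add)
  then show ?thesis
    using x y signed_monomialsI[of Q "a + c" q "b + e"] by auto
qed

lemma signed_monomials_prod_list:
  assumes "Q \<noteq> 0" and "q \<noteq> 0" and "set xs \<subseteq> signed_monomials Q q"
  shows "prod_list xs \<in> signed_monomials Q q"
  using assms(3)
proof (induction xs)
  case Nil
  then show ?case using signed_monomialsI(1)[of Q 0 q 0] by simp
next
  case (Cons x xs)
  then show ?case using signed_monomials_mult[OF assms(1,2)] by simp
qed

lemma conj_roots_signed_monomials:
  assumes Q: "Q \<noteq> 0" and q: "q \<noteq> 0" and ps: "set ps \<subseteq> signed_monomials Q q"
  shows "set (conj_roots q ps) \<subseteq> signed_monomials Q q"
proof -
  have "x / q\<^sup>2 \<in> signed_monomials Q q \<and> x * q\<^sup>2 \<in> signed_monomials Q q"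
    if "x \<in> signed_monomials Q q" for x
    using signed_monomials_mult[OF Q q that signed_monomialsI(1)[of Q 0 q "-2"]]
      signed_monomials_mult[OF Q q that signed_monomialsI(1)[of Q 0 q 2]]
    by (simp add: power_int_minus divide_inverse)
  then show ?thesis
    using ps by (auto simp: conj_roots_def scaled_roots_def)
qed

lemma K_word_Suc: "1 \<le> i \<Longrightarrow> K_word (Suc i) = i # K_word i @ [i]"
  by (simp add: K_word_def)

lemma set_K_word: "1 \<le> i \<Longrightarrow> set (K_word i) = {0..<i}"
  by (auto simp: K_word_def)

lemma set_cK_word: "set (cK_word d) \<subseteq> {..<d}"
  unfolding cK_word_def using set_K_word by (auto simp del: upt_Suc)

locale hecke_B_rep = algebra_over_field sc
  for sc :: "'k::field \<Rightarrow> 'a::ring_1" +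
  fixes T :: "nat \<Rightarrow> 'a" and d :: nat and Q q :: 'k
  assumes Q_nonzero: "Q \<noteq> 0" and q_nonzero: "q \<noteq> 0"
    and quadratic_0: "T 0 * T 0 = sc (inverse Q - Q) * T 0 + 1"
    and quadratic: "1 \<le> j \<Longrightarrow> j < d \<Longrightarrow> T j * T j = sc (inverse q - q) * T j + 1"
    and braid: "1 \<le> i \<Longrightarrow> i + 1 < d \<Longrightarrow> T i * T (i + 1) * T i = T (i + 1) * T i * T (i + 1)"
    and braid_0: "1 < d \<Longrightarrow> T 0 * T 1 * T 0 * T 1 = T 1 * T 0 * T 1 * T 0"
    and far_commute: "i < d \<Longrightarrow> j < d \<Longrightarrow> i + 1 < j \<Longrightarrow> T i * T j = T j * T i"
begin

definition K :: "nat \<Rightarrow> 'a" where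
  "K i = prod_list (map T (K_word i))"

lemma K_1: "K 1 = T 0"
  by (simp add: K_def K_word_def)

lemma K_Suc: "1 \<le> i \<Longrightarrow> K (Suc i) = T i * K i * T i"
  by (simp add: K_def K_word_Suc mult.assoc)

lemma T_commute_K: "1 \<le> i \<Longrightarrow> i < j \<Longrightarrow> j < d \<Longrightarrow> T j * K i = K i * T j"
  unfolding K_def by (rule commute_prod_list) (auto simp: set_K_word intro!: far_commute[symmetric])

lemma K_commute_K_Suc: "1 \<le> i \<Longrightarrow> i < d \<Longrightarrow> K i * K (Suc i) = K (Suc i) * K i"
proof (induction i rule: nat_induct_at_least)
  case base
  have "K (Suc 1) = T 1 * T 0 * T 1"
    using K_Suc[of 1] K_1 by simp
  then show ?case
    using braid_0 base K_1 by (simp add: mult.assoc)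
next
  case (Suc i)
  let ?a = "T i" and ?b = "T (Suc i)"
  have IH: "K i * K (Suc i) = K (Suc i) * K i"
    using Suc by simp
  have br: "?a * (?b * (?a * X)) = ?b * (?a * (?b * X))" for X
    using braid[of i] Suc by (simp add: mult.assoc[symmetric])
  have Kb: "K i * (?b * X) = ?b * (K i * X)" for X
    using T_commute_K[of i "Suc i"] Suc by (simp add: mult.assoc[symmetric])
  have K1: "K (Suc i) = ?a * K i * ?a" and K2: "K (Suc (Suc i)) = ?b * K (Suc i) * ?b"
    using K_Suc[of i] K_Suc[of "Suc i"] Suc by simp_all
  have "K (Suc i) * K (Suc (Suc i)) = ?a * (K i * (?a * (?b * (?a * (K i * (?a * ?b))))))"
    using K1 K2 by (simp add: mult.assoc)
  also have "\<dots> = ?a * (K i * (?b * (?a * (?b * (K i * (?a * ?b))))))"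
    by (simp only: br)
  also have "\<dots> = ?a * (?b * (K i * (?a * (K i * (?b * (?a * ?b))))))"
    by (simp only: Kb)
  also have "\<dots> = ?a * (?b * (K i * (?a * (K i * (?a * (?b * ?a))))))"
    using br[of 1] by (simp only: mult_1_right)
  also have "\<dots> = ?a * ?b * (K i * K (Suc i)) * ?b * ?a"
    using K1 by (simp add: mult.assoc)
  finally have lhs: "K (Suc i) * K (Suc (Suc i)) = ?a * ?b * (K i * K (Suc i)) * ?b * ?a" .
  have "K (Suc (Suc i)) * K (Suc i) = ?b * (?a * (K i * (?a * (?b * (?a * (K i * ?a))))))"
    using K1 K2 by (simp add: mult.assoc)
  also have "\<dots> = ?a * (?b * (?a * (K i * (?a * (K i * (?b * ?a))))))"
    by (simp only: br Kb)
  also have "\<dots> = ?a * ?b * (K (Suc i) * K i) * ?b * ?a"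
    using K1 by (simp add: mult.assoc)
  finally show ?case
    using lhs IH by simp
qed

lemma K_commute_less: "1 \<le> i \<Longrightarrow> i < j \<Longrightarrow> j \<le> d \<Longrightarrow> K i * K j = K j * K i"
proof (induction j)
  case (Suc j)
  show ?case
  proof (cases "i = j")
    case True
    then show ?thesis using K_commute_K_Suc[of i] Suc.prems by simp
  next
    case False
    then have IH: "K i * K j = K j * K i"
      using Suc by simp
    have TK: "K i * T j = T j * K i" and KS: "K (Suc j) = T j * K j * T j"
      using T_commute_K[of i j] K_Suc[of j] Suc.prems False by simp_all
    have "K i * K (Suc j) = (K i * T j) * K j * T j"
      by (simp only: KS mult.assoc)
    also have "\<dots> = T j * (K i * K j) * T j"
      by (simp only: TK mult.assoc)
    also have "\<dots> = T j * K j * (K i * T j)"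
      by (simp only: IH mult.assoc)
    also have "\<dots> = K (Suc j) * K i"
      by (simp only: KS TK mult.assoc)
    finally show ?thesis .
  qed
qed simp

lemma K_commute: "1 \<le> i \<Longrightarrow> 1 \<le> j \<Longrightarrow> i \<le> d \<Longrightarrow> j \<le> d \<Longrightarrow> K i * K j = K j * K i"
  using K_commute_less[of i j] K_commute_less[of j i] by (cases i j rule: linorder_cases) auto

lemma K_annihilated:
  "1 \<le> i \<Longrightarrow> i \<le> d \<Longrightarrow> \<exists>ps. set ps \<subseteq> signed_monomials Q q \<and> root_prod (K i) ps = 0"
proof (induction i rule: nat_induct_at_least)
  case base
  have "set [inverse Q, - Q] \<subseteq> signed_monomials Q q"
    using signed_monomialsI[of Q "-1" q 0] signed_monomialsI[of Q 1 q 0]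
    by (simp add: power_int_minus)
  then show ?case
    unfolding K_1 using root_prod_quadratic[OF quadratic_0 Q_nonzero] by blast
next
  case (Suc i)
  then obtain ps where ps: "set ps \<subseteq> signed_monomials Q q" "root_prod (K i) ps = 0"
    by (meson Suc_leD)
  have "K i * K (Suc i) = K (Suc i) * K i" and "T i * K i * T i = K (Suc i)"
    and "T i * T i = sc (inverse q - q) * T i + 1"
    using K_commute_K_Suc[of i] K_Suc[of i] quadratic[of i] Suc.hyps Suc.prems by simp_all
  then have "root_prod (K (Suc i)) (conj_roots q ps) = 0"
    by (rule root_prod_conj_annihilates[OF _ _ _ q_nonzero ps(2)])
  then show ?case
    using conj_roots_signed_monomials[OF Q_nonzero q_nonzero ps(1)] by blast
qed

end

definition smul :: "'k::field \<Rightarrow> ('i \<Rightarrow> 'k) \<Rightarrow> ('i \<Rightarrow> 'k)" where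
  "smul c u = (\<lambda>w. c * u w)"

lemma smul_smul: "smul a (smul b u) = smul (a * b) u"
  by (simp add: smul_def mult.assoc)

lemma smul_diff: "smul c (u - v) = smul c u - smul c v"
  by (simp add: smul_def fun_eq_iff algebra_simps)

lemma smul_cancel: "smul a u = smul b u \<Longrightarrow> u \<noteq> 0 \<Longrightarrow> a = b"
  by (auto simp: smul_def fun_eq_iff)

lemma smul_zero [simp]: "smul c 0 = 0"
  by (simp add: smul_def fun_eq_iff)

definition linear_fun :: "(('i \<Rightarrow> 'k::field) \<Rightarrow> ('i \<Rightarrow> 'k)) \<Rightarrow> bool" where
  "linear_fun f \<longleftrightarrow> (\<forall>u v. f (u + v) = f u + f v) \<and> (\<forall>c u. f (smul c u) = smul c (f u))"

lemma linear_fun_add: "linear_fun f \<Longrightarrow> f (u + v) = f u + f v"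
  and linear_fun_smul: "linear_fun f \<Longrightarrow> f (smul c u) = smul c (f u)"
  by (simp_all add: linear_fun_def)

lemma linear_fun_zero: "linear_fun f \<Longrightarrow> f 0 = 0"
  using linear_fun_smul[of f 0 0] by (simp add: smul_def zero_fun_def)

lemma linear_fun_diff: "linear_fun f \<Longrightarrow> f (u - v) = f u - f v"
  using linear_fun_add[of f "u - v" v] by (simp add: algebra_simps)

lemma linear_fun_sum: "linear_fun f \<Longrightarrow> f (sum g A) = (\<Sum>a\<in>A. f (g a))"
  by (induction A rule: infinite_finite_induct) (auto simp: linear_fun_zero linear_fun_add)

typedef (overloaded) ('i, 'k) linop = "{f :: ('i \<Rightarrow> 'k::field) \<Rightarrow> ('i \<Rightarrow> 'k). linear_fun f}"
  morphisms apply_linop Abs_linop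
  by (rule exI[of _ id]) (simp add: linear_fun_def)

setup_lifting type_definition_linop

lemma linear_fun_apply_linop: "linear_fun (apply_linop X)"
  using apply_linop by simp

lemma apply_linop_smul: "apply_linop X (smul c u) = smul c (apply_linop X u)"
  and apply_linop_diff: "apply_linop X (u - v) = apply_linop X u - apply_linop X v"
  using linear_fun_smul linear_fun_diff linear_fun_apply_linop by blast+

text \<open>Products are composed in diagrammatic order, \<open>apply_linop (X * Y) = apply_linop Y \<circ>
  apply_linop X\<close>, because the Hecke algebra acts from the right.\<close>

instantiation linop :: (type, field) ring_1
begin

lift_definition zero_linop :: "('a, 'b) linop" is "\<lambda>u. 0"
  by (simp add: linear_fun_def smul_def zero_fun_def)

lift_definition one_linop :: "('a, 'b) linop" is "\<lambda>u. u"
  by (simp add: linear_fun_def)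

lift_definition plus_linop :: "('a, 'b) linop \<Rightarrow> ('a, 'b) linop \<Rightarrow> ('a, 'b) linop"
  is "\<lambda>f g u. f u + g u"
  by (simp add: linear_fun_def smul_def plus_fun_def algebra_simps)

lift_definition uminus_linop :: "('a, 'b) linop \<Rightarrow> ('a, 'b) linop" is "\<lambda>f u. - f u"
  by (auto simp: linear_fun_def smul_def fun_eq_iff)

lift_definition minus_linop :: "('a, 'b) linop \<Rightarrow> ('a, 'b) linop \<Rightarrow> ('a, 'b) linop"
  is "\<lambda>f g u. f u - g u"
  by (auto simp: linear_fun_def smul_def fun_eq_iff algebra_simps)

lift_definition times_linop :: "('a, 'b) linop \<Rightarrow> ('a, 'b) linop \<Rightarrow> ('a, 'b) linop"
  is "\<lambda>f g u. g (f u)"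
  by (simp add: linear_fun_def)

instance
proof
  fix X Y Z :: "('a, 'b) linop"
  show "X * Y * Z = X * (Y * Z)" "1 * X = X" "X * 1 = X" "X + Y + Z = X + (Y + Z)"
    "X + Y = Y + X" "0 + X = X" "- X + X = 0" "X - Y = X + - Y" "X * (Y + Z) = X * Y + X * Z"
    by (transfer; simp add: algebra_simps)+
  show "(X + Y) * Z = X * Z + Y * Z"
    by transfer (simp add: fun_eq_iff linear_fun_add)
  have "(\<lambda>u::'a \<Rightarrow> 'b. 0) \<noteq> (\<lambda>u. u)"
  proof
    assume "(\<lambda>u::'a \<Rightarrow> 'b. 0) = (\<lambda>u. u)"
    then have "(0::'a \<Rightarrow> 'b) = 1"
      by metis
    then show False
      by (simp add: fun_eq_iff)
  qed
  then show "(0::('a, 'b) linop) \<noteq> 1"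
    by transfer
qed

end

lemma apply_linop_times: "apply_linop (X * Y) u = apply_linop Y (apply_linop X u)"
  and apply_linop_plus: "apply_linop (X + Y) u = apply_linop X u + apply_linop Y u"
  and apply_linop_minus: "apply_linop (X - Y) u = apply_linop X u - apply_linop Y u"
  and apply_linop_one: "apply_linop 1 u = u"
  and apply_linop_zero: "apply_linop 0 u = 0"
  by (transfer; simp)+

lift_definition scalar_linop :: "'k::field \<Rightarrow> ('i, 'k) linop" is smul
  by (simp add: linear_fun_def smul_def plus_fun_def algebra_simps)

lemma apply_scalar_linop: "apply_linop (scalar_linop c) u = smul c u"
  by transfer simp

interpretation linop: algebra_over_field scalar_linop
proof
  fix a b :: "'k::field" and X :: "('i, 'k) linop"
  show "scalar_linop (a + b) = scalar_linop a + scalar_linop b"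
    "scalar_linop (a * b) = scalar_linop a * scalar_linop b"
    "scalar_linop 1 = (1 :: ('i, 'k) linop)"
    by (transfer; simp add: smul_def fun_eq_iff algebra_simps)+
  show "scalar_linop a * X = X * scalar_linop a"
    by transfer (simp add: linear_fun_smul)
qed

lemma root_prod_eigenvector:
  fixes X :: "('i, 'k::field) linop"
  assumes "apply_linop (linop.root_prod X ps) u = 0" and "F u" and "u \<noteq> 0"
    and invariant: "\<And>v. F v \<Longrightarrow> F (apply_linop X v)"
    and subspace: "\<And>v c. F v \<Longrightarrow> F (smul c v)" "\<And>v w. F v \<Longrightarrow> F w \<Longrightarrow> F (v - w)"
  shows "\<exists>a\<in>set ps. \<exists>u'. F u' \<and> u' \<noteq> 0 \<and> apply_linop X u' = smul a u'"
  using assms(1-3)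
proof (induction ps arbitrary: u)
  case Nil
  then show ?case by (simp add: apply_linop_one)
next
  case (Cons a ps)
  show ?case
  proof (cases "apply_linop X u - smul a u = 0")
    case True
    then show ?thesis using Cons.prems by auto
  next
    case False
    have "F (apply_linop X u - smul a u)"
      using Cons.prems(2) invariant subspace by blast
    moreover have "apply_linop (linop.root_prod X ps) (apply_linop X u - smul a u) = 0"
      using Cons.prems(1)
      by (simp add: apply_linop_times apply_linop_minus apply_scalar_linop zero_fun_def)
    ultimately show ?thesis
      using Cons.IH False by (meson list.set_intros(2))
  qed
qed

lemma common_eigenvector:
  fixes K :: "nat \<Rightarrow> ('i, 'k::field) linop"
  assumes "finite I"
    and "\<And>i j. i \<in> I \<Longrightarrow> j \<in> I \<Longrightarrow> K i * K j = K j * K i"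
    and "\<And>i. i \<in> I \<Longrightarrow> \<exists>ps. set ps \<subseteq> S \<and> linop.root_prod (K i) ps = 0"
    and "\<And>i v. i \<in> I \<Longrightarrow> F v \<Longrightarrow> F (apply_linop (K i) v)"
    and subspace: "\<And>v c. F v \<Longrightarrow> F (smul c v)" "\<And>v w. F v \<Longrightarrow> F w \<Longrightarrow> F (v - w)"
    and "F v" and "v \<noteq> 0"
  shows "\<exists>u lam. F u \<and> u \<noteq> 0 \<and> (\<forall>i\<in>I. lam i \<in> S \<and> apply_linop (K i) u = smul (lam i) u)"
  using assms(1-4)
proof (induction I rule: finite_induct)
  case empty
  then show ?case using \<open>F v\<close> \<open>v \<noteq> 0\<close> by blast
next
  case (insert k I)
  have "\<exists>u lam. F u \<and> u \<noteq> 0 \<and> (\<forall>i\<in>I. lam i \<in> S \<and> apply_linop (K i) u = smul (lam i) u)"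
    by (rule insert.IH) (auto intro: insert.prems)
  then obtain u lam where u: "F u" "u \<noteq> 0"
    and lam: "\<forall>i\<in>I. lam i \<in> S \<and> apply_linop (K i) u = smul (lam i) u"
    by blast
  define G where "G w \<longleftrightarrow> F w \<and> (\<forall>i\<in>I. apply_linop (K i) w = smul (lam i) w)" for w
  have "G (apply_linop (K k) w)" if "G w" for w
  proof -
    have "apply_linop (K i) (apply_linop (K k) w) = apply_linop (K k) (apply_linop (K i) w)"
      if "i \<in> I" for i
      using insert.prems(1)[of k i] that by (metis apply_linop_times insertCI)
    then show ?thesis
      using \<open>G w\<close> insert.prems(3) unfolding G_def by (simp add: apply_linop_smul)
  qed
  moreover have "G (smul c w)" if "G w" for w c
    using that subspace(1) unfolding G_def by (simp add: apply_linop_smul smul_smul mult.commute)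
  moreover have "G (w - w')" if "G w" "G w'" for w w'
    using that subspace(2) unfolding G_def by (simp add: apply_linop_diff smul_diff)
  moreover obtain ps where ps: "set ps \<subseteq> S" "linop.root_prod (K k) ps = 0"
    using insert.prems(2) by blast
  ultimately obtain a u' where a: "a \<in> set ps" and u': "G u'" "u' \<noteq> 0"
    "apply_linop (K k) u' = smul a u'"
    using root_prod_eigenvector[of "K k" ps u G] u lam by (auto simp: G_def apply_linop_zero)
  have "\<forall>i\<in>insert k I. (lam(k := a)) i \<in> S \<and> apply_linop (K i) u' = smul ((lam(k := a)) i) u'"
    using a ps(1) u' lam insert.hyps(2) unfolding G_def by auto
  then show ?case
    using u' unfolding G_def by blast
qed

lemma apply_prod_list_eigenvector:
  assumes "\<And>i. i \<in> set is \<Longrightarrow> apply_linop (K i) u = smul (lam i) u"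
  shows "apply_linop (prod_list (map K is)) u = smul (prod_list (map lam is)) u"
  using assms
proof (induction "is" arbitrary: u rule: rev_induct)
  case Nil
  then show ?case by (simp add: apply_linop_one smul_def)
next
  case (snoc i "is")
  then show ?case
    by (simp add: apply_linop_times apply_linop_smul smul_smul mult.commute)
qed

locale hecke_B_action = hecke_B_rep scalar_linop T d Q q
  for T :: "nat \<Rightarrow> ('i, 'k::field) linop" and d :: nat and Q q :: 'k
begin

definition cK :: "('i, 'k) linop" where
  "cK = prod_list (map K [1..<d + 1])"

lemma cK_eq_prod_cK_word: "cK = prod_list (map T (cK_word d))"
proof -
  have "prod_list (map T (concat xss)) = prod_list (map (\<lambda>xs. prod_list (map T xs)) xss)" for xss
    by (induction xss) simp_all
  then show ?thesis
    by (simp add: cK_def cK_word_def K_def[abs_def] comp_def del: upt_Suc)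
qed

lemma cK_eigenvalue:
  assumes "apply_linop cK v = smul e v" and "v \<noteq> 0"
  shows "e \<in> signed_monomials Q q"
proof -
  have "K i * cK = cK * K i" if "i \<in> {1..d}" for i
    unfolding cK_def using that by (intro commute_prod_list) (auto intro: K_commute)
  then have "apply_linop cK (apply_linop (K i) w) = smul e (apply_linop (K i) w)"
    if "i \<in> {1..d}" and "apply_linop cK w = smul e w" for i w
    using that by (metis apply_linop_times apply_linop_smul)
  then have "\<exists>u lam. apply_linop cK u = smul e u \<and> u \<noteq> 0 \<and>
      (\<forall>i\<in>{1..d}. lam i \<in> signed_monomials Q q \<and> apply_linop (K i) u = smul (lam i) u)"
    using K_commute K_annihilated assms
    by (intro common_eigenvector)
      (auto simp: apply_linop_smul apply_linop_diff smul_smul smul_diff mult.commute)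
  then obtain u lam where u: "apply_linop cK u = smul e u" "u \<noteq> 0"
    and lam: "\<forall>i\<in>{1..d}. lam i \<in> signed_monomials Q q \<and> apply_linop (K i) u = smul (lam i) u"
    by blast
  have "apply_linop cK u = smul (prod_list (map lam [1..<d + 1])) u"
    unfolding cK_def using lam by (intro apply_prod_list_eigenvector) auto
  then have "e = prod_list (map lam [1..<d + 1])"
    using u by (metis smul_cancel)
  also have "\<dots> \<in> signed_monomials Q q"
    using lam by (intro signed_monomials_prod_list Q_nonzero q_nonzero) auto
  finally show ?thesis .
qed

end

section \<open>The representation on the tensor space\<close>

lemma finite_idx_set: "finite (idx_set n)"
proof (rule finite_subset)
  show "idx_set n \<subseteq> {- int n .. int n}"
    unfolding idx_set_def by auto
qed simp

lemma idx_set_uminus [simp]: "- a \<in> idx_set n \<longleftrightarrow> a \<in> idx_set n"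
  by (simp add: idx_set_def flip: even_iff_mod_2_eq_zero)

lemma finite_words: "finite (words n d)"
proof -
  have "words n d = {w. set w \<subseteq> idx_set n \<and> length w = d}"
    unfolding words_def by auto
  then show ?thesis
    using finite_lists_length_eq[OF finite_idx_set] by simp
qed

lemma delta_apply: "delta w u = (if u = w then 1 else 0)"
  by (simp add: delta_def)

lemma delta_mult: "delta w u * y = (if u = w then y else 0)"
  and mult_delta: "y * delta w u = (if u = w then y else 0)"
  by (simp_all add: delta_def)

lemma sum_fun_apply: "sum g A x = (\<Sum>a\<in>A. g a x)"
  by (induction A rule: infinite_finite_induct) auto

lemma smul_delta: "(\<lambda>u. c * delta w u) = smul c (delta w)"
  by (simp add: smul_def)

lemma plus_smul_delta: "(\<lambda>u. delta v u + c * delta w u) = delta v + smul c (delta w)"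
  by (simp add: smul_def fun_eq_iff)

lemma gen_basis_swap:
  assumes "1 \<le> j" and "length xs = j - 1"
  shows "gen_basis Q q j (xs @ a # b # zs) =
    (if a = b then smul (inverse q) (delta (xs @ a # b # zs))
     else if a < b then delta (xs @ b # a # zs)
     else delta (xs @ b # a # zs) + smul (inverse q - q) (delta (xs @ a # b # zs)))"
proof -
  have "j = Suc (length xs)"
    using assms by simp
  then show ?thesis
    unfolding gen_basis_def swap_at_def Let_def smul_delta plus_smul_delta
    by (simp add: nth_append list_update_append)
qed

lemma gen_basis_0:
  "gen_basis Q q 0 (a # zs) =
    (if a = 0 then smul (inverse Q) (delta (a # zs))
     else if 0 < a then delta (- a # zs)
     else delta (- a # zs) + smul (inverse Q - Q) (delta (a # zs)))"
  unfolding gen_basis_def Let_def smul_delta plus_smul_delta by simp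

text \<open>Instances of \<open>gen_basis_swap\<close> in word shapes the simplifier can match directly.\<close>

lemma gen_basis_swap_instances:
  "gen_basis Q q (Suc 0) (a # b # zs) =
    (if a = b then smul (inverse q) (delta (a # b # zs))
     else if a < b then delta (b # a # zs)
     else delta (b # a # zs) + smul (inverse q - q) (delta (a # b # zs)))"
  "gen_basis Q q 1 (a # b # zs) =
    (if a = b then smul (inverse q) (delta (a # b # zs))
     else if a < b then delta (b # a # zs)
     else delta (b # a # zs) + smul (inverse q - q) (delta (a # b # zs)))"
  "1 \<le> j \<Longrightarrow> length xs = j - 1 \<Longrightarrow> gen_basis Q q (Suc j) (xs @ a # b # c # zs) =
    (if b = c then smul (inverse q) (delta (xs @ a # b # c # zs))
     else if b < c then delta (xs @ a # c # b # zs)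
     else delta (xs @ a # c # b # zs) + smul (inverse q - q) (delta (xs @ a # b # c # zs)))"
  "length xs + length ys + 3 = j \<Longrightarrow> gen_basis Q q j (xs @ a # b # ys @ c # e # zs) =
    (if c = e then smul (inverse q) (delta (xs @ a # b # ys @ c # e # zs))
     else if c < e then delta (xs @ a # b # ys @ e # c # zs)
     else delta (xs @ a # b # ys @ e # c # zs) +
       smul (inverse q - q) (delta (xs @ a # b # ys @ c # e # zs)))"
  "length ys + 2 = j \<Longrightarrow> gen_basis Q q j (a # ys @ c # e # zs) =
    (if c = e then smul (inverse q) (delta (a # ys @ c # e # zs))
     else if c < e then delta (a # ys @ e # c # zs)
     else delta (a # ys @ e # c # zs) + smul (inverse q - q) (delta (a # ys @ c # e # zs)))"
  using gen_basis_swap[of 1 "[]" Q q a b zs] gen_basis_swap[of "Suc j" "xs @ [a]" Q q b c zs]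
    gen_basis_swap[of j "xs @ a # b # ys" Q q c e zs] gen_basis_swap[of j "a # ys" Q q c e zs]
  by simp_all

lemma split_word2:
  assumes "k + 2 \<le> length w"
  obtains xs a b ys where "w = xs @ a # b # ys" and "length xs = k"
proof -
  have "w = take k w @ w ! k # w ! Suc k # drop (Suc (Suc k)) w"
    using assms by (simp add: Cons_nth_drop_Suc)
  then show thesis
    using that assms by simp
qed

lemma split_word3:
  assumes "k + 3 \<le> length w"
  obtains xs a b c ys where "w = xs @ a # b # c # ys" and "length xs = k"
proof -
  have "w = take k w @ w ! k # w ! Suc k # w ! Suc (Suc k) # drop (Suc (Suc (Suc k))) w"
    using assms by (simp add: Cons_nth_drop_Suc)
  then show thesis
    using that assms by simp
qed

lemma split_word_far:
  assumes "k + 2 \<le> l" and "l + 2 \<le> length w"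
  obtains xs a b ys c e zs where "w = xs @ a # b # ys @ c # e # zs"
    and "length xs = k" and "length xs + length ys + 2 = l"
proof -
  have "k + 2 \<le> length w"
    using assms by simp
  then obtain xs a b r where w: "w = xs @ a # b # r" and xs: "length xs = k"
    by (rule split_word2)
  then have "l - k - 2 + 2 \<le> length r"
    using assms by simp
  then obtain ys c e zs where r: "r = ys @ c # e # zs" and ys: "length ys = l - k - 2"
    by (rule split_word2)
  show thesis
    using that[of xs a b ys c e zs] w xs r ys assms by simp
qed

locale tensor_rep =
  fixes n d :: nat and Q q :: "'k::field"
  assumes Q_nonzero: "Q \<noteq> 0" and q_nonzero: "q \<noteq> 0" and d_pos: "1 \<le> d"
begin

abbreviation W :: "int list set" where
  "W \<equiv> words n d"

definition restrict_words :: "(int list \<Rightarrow> 'k) \<Rightarrow> (int list \<Rightarrow> 'k)" where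
  "restrict_words v = (\<lambda>u. if u \<in> W then v u else 0)"

text \<open>The ring \<open>linop\<close> consists of operators on all coefficient functions, so \<open>T\<^sub>j\<close> is
  extended beyond the tensor space by the scalar \<open>Q\<^sup>-\<^sup>1\<close> resp. \<open>q\<^sup>-\<^sup>1\<close>, a root of its quadratic
  relation; all defining relations of \<open>\<H>\<^sup>B\<^sub>Q\<^sub>,\<^sub>q(d)\<close> then still hold there.\<close>

definition off_scalar :: "nat \<Rightarrow> 'k" where
  "off_scalar j = (if j = 0 then inverse Q else inverse q)"

definition gen_fun :: "nat \<Rightarrow> (int list \<Rightarrow> 'k) \<Rightarrow> (int list \<Rightarrow> 'k)" where
  "gen_fun j v = gen_act n d Q q j v + smul (off_scalar j) (v - restrict_words v)"

lemma restrict_words_add: "restrict_words (u + v) = restrict_words u + restrict_words v"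
  and restrict_words_smul: "restrict_words (smul c u) = smul c (restrict_words u)"
  by (simp_all add: restrict_words_def fun_eq_iff smul_def)

lemma gen_act_add: "gen_act n d Q q j (u + v) = gen_act n d Q q j u + gen_act n d Q q j v"
  and gen_act_smul: "gen_act n d Q q j (smul c u) = smul c (gen_act n d Q q j u)"
  by (simp_all add: gen_act_def fun_eq_iff smul_def algebra_simps sum.distrib sum_distrib_left)

lemma linear_fun_gen_fun: "linear_fun (gen_fun j)"
  unfolding linear_fun_def gen_fun_def
  by (simp add: gen_act_add gen_act_smul restrict_words_add restrict_words_smul)
    (simp add: smul_def fun_eq_iff algebra_simps)

definition gen_linop :: "nat \<Rightarrow> (int list, 'k) linop" where
  "gen_linop j = Abs_linop (gen_fun j)"

lemma apply_gen_linop: "apply_linop (gen_linop j) = gen_fun j"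
  unfolding gen_linop_def using linear_fun_gen_fun by (simp add: Abs_linop_inverse)

lemma gen_fun_add: "gen_fun j (u + v) = gen_fun j u + gen_fun j v"
  and gen_fun_smul: "gen_fun j (smul c u) = smul c (gen_fun j u)"
  using linear_fun_gen_fun linear_fun_add linear_fun_smul by blast+

lemma gen_fun_off_words:
  assumes "restrict_words u = 0"
  shows "gen_fun j u = smul (off_scalar j) u"
proof -
  have "u w = 0" if "w \<in> W" for w
    using fun_cong[OF assms, of w] that by (simp add: restrict_words_def)
  then have "gen_act n d Q q j u = 0"
    by (simp add: gen_act_def fun_eq_iff)
  then show ?thesis
    by (simp add: gen_fun_def assms)
qed

lemma gen_fun_delta:
  assumes "w \<in> W"
  shows "gen_fun j (delta w) = gen_basis Q q j w"
proof -
  have "restrict_words (delta w) = delta w"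
    using assms by (auto simp: restrict_words_def delta_apply fun_eq_iff)
  moreover have "gen_act n d Q q j (delta w) = gen_basis Q q j w"
    using assms by (simp add: gen_act_def delta_mult finite_words)
  ultimately show ?thesis
    by (simp add: gen_fun_def)
qed

lemma linop_eq_on_words:
  fixes X Y :: "(int list, 'k) linop"
  assumes words: "\<And>w. w \<in> W \<Longrightarrow> apply_linop X (delta w) = apply_linop Y (delta w)"
    and off_words: "\<And>u. restrict_words u = 0 \<Longrightarrow> apply_linop X u = apply_linop Y u"
  shows "X = Y"
proof -
  have "apply_linop X u = apply_linop Y u" for u
  proof -
    have decomp: "u = (\<Sum>w\<in>W. smul (u w) (delta w)) + (u - restrict_words u)"
      by (simp add: fun_eq_iff restrict_words_def smul_def sum_fun_apply mult_delta finite_words)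
    have "restrict_words (u - restrict_words u) = 0"
      by (simp add: restrict_words_def fun_eq_iff)
    then show ?thesis
      by (subst (1 2) decomp) (simp add: linear_fun_add[OF linear_fun_apply_linop]
          linear_fun_sum[OF linear_fun_apply_linop] apply_linop_smul words off_words)
  qed
  then show ?thesis
    by (metis apply_linop_inject ext)
qed

lemmas gen_fun_simps = gen_fun_add gen_fun_smul gen_fun_delta gen_basis_swap gen_basis_0
  gen_basis_swap_instances

lemma quadratic_0_basis:
  assumes "a # zs \<in> W"
  shows "gen_fun 0 (gen_fun 0 (delta (a # zs))) =
    smul (inverse Q - Q) (gen_fun 0 (delta (a # zs))) + delta (a # zs)"
  using assms Q_nonzero
  by (cases a "0::int" rule: linorder_cases;
      simp add: gen_fun_simps words_def; simp add: fun_eq_iff smul_def delta_apply field_simps)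

lemma quadratic_basis:
  assumes "1 \<le> j" and "length xs = j - 1" and "xs @ a # b # zs \<in> W"
  shows "gen_fun j (gen_fun j (delta (xs @ a # b # zs))) =
    smul (inverse q - q) (gen_fun j (delta (xs @ a # b # zs))) + delta (xs @ a # b # zs)"
  using assms q_nonzero
  by (cases a b rule: linorder_cases;
      simp add: gen_fun_simps words_def; simp add: fun_eq_iff smul_def delta_apply field_simps)

lemma braid_basis:
  assumes "1 \<le> i" and "length xs = i - 1" and "xs @ a # b # c # ys \<in> W"
  shows "gen_fun i (gen_fun (Suc i) (gen_fun i (delta (xs @ a # b # c # ys)))) =
    gen_fun (Suc i) (gen_fun i (gen_fun (Suc i) (delta (xs @ a # b # c # ys))))"
  using assms q_nonzero
  by (cases a b rule: linorder_cases; cases b c rule: linorder_cases;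
      cases a c rule: linorder_cases;
      simp add: gen_fun_simps words_def; simp add: fun_eq_iff smul_def delta_apply field_simps)

lemma braid_0_basis:
  assumes "a # b # zs \<in> W"
  shows "gen_fun 1 (gen_fun 0 (gen_fun 1 (gen_fun 0 (delta (a # b # zs))))) =
    gen_fun 0 (gen_fun 1 (gen_fun 0 (gen_fun 1 (delta (a # b # zs)))))"
  using assms Q_nonzero q_nonzero
  by (cases a "0::int" rule: linorder_cases; cases b "0::int" rule: linorder_cases;
      cases a b rule: linorder_cases; cases a "- b" rule: linorder_cases;
      simp add: gen_fun_simps words_def; simp add: fun_eq_iff smul_def delta_apply field_simps)

lemma far_commute_basis:
  assumes "1 \<le> i" and "length xs = i - 1" and "length xs + length ys + 3 = j"
    and "xs @ a # b # ys @ c # e # zs \<in> W"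
  shows "gen_fun j (gen_fun i (delta (xs @ a # b # ys @ c # e # zs))) =
    gen_fun i (gen_fun j (delta (xs @ a # b # ys @ c # e # zs)))"
  using assms q_nonzero
  by (cases a b rule: linorder_cases; cases c e rule: linorder_cases;
      simp add: gen_fun_simps words_def; simp add: fun_eq_iff smul_def delta_apply field_simps)

lemma far_commute_0_basis:
  assumes "length ys + 2 = j" and "a # ys @ c # e # zs \<in> W"
  shows "gen_fun j (gen_fun 0 (delta (a # ys @ c # e # zs))) =
    gen_fun 0 (gen_fun j (delta (a # ys @ c # e # zs)))"
  using assms Q_nonzero q_nonzero
  by (cases a "0::int" rule: linorder_cases; cases c e rule: linorder_cases;
      simp add: gen_fun_simps words_def; simp add: fun_eq_iff smul_def delta_apply field_simps)

lemma gen_fun_off_words_smul: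
  "restrict_words u = 0 \<Longrightarrow> gen_fun j (smul c u) = smul (c * off_scalar j) u"
  by (simp add: gen_fun_smul gen_fun_off_words smul_smul)

lemmas apply_linop_simps = apply_linop_times apply_linop_plus apply_linop_one apply_scalar_linop
  apply_gen_linop

lemmas off_words_simps = apply_linop_simps gen_fun_off_words gen_fun_off_words_smul gen_fun_add
  smul_smul

lemma gen_linop_quadratic_0:
  "gen_linop 0 * gen_linop 0 = scalar_linop (inverse Q - Q) * gen_linop 0 + 1"
proof (rule linop_eq_on_words)
  fix w assume w: "w \<in> W"
  then obtain a zs where "w = a # zs"
    using d_pos by (cases w) (auto simp: words_def)
  then show "apply_linop (gen_linop 0 * gen_linop 0) (delta w) =
      apply_linop (scalar_linop (inverse Q - Q) * gen_linop 0 + 1) (delta w)"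
    using quadratic_0_basis w by (simp add: apply_linop_simps gen_fun_smul)
next
  fix u :: "int list \<Rightarrow> 'k" assume "restrict_words u = 0"
  then show "apply_linop (gen_linop 0 * gen_linop 0) u =
      apply_linop (scalar_linop (inverse Q - Q) * gen_linop 0 + 1) u"
    using Q_nonzero
    by (simp add: off_words_simps; simp add: off_scalar_def smul_def fun_eq_iff field_simps)
qed

lemma gen_linop_quadratic:
  assumes "1 \<le> j" and "j < d"
  shows "gen_linop j * gen_linop j = scalar_linop (inverse q - q) * gen_linop j + 1"
proof (rule linop_eq_on_words)
  fix w assume w: "w \<in> W"
  then have "j - 1 + 2 \<le> length w"
    using assms by (simp add: words_def)
  then obtain xs a b zs where "w = xs @ a # b # zs" and "length xs = j - 1"
    by (rule split_word2)
  then show "apply_linop (gen_linop j * gen_linop j) (delta w) =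
      apply_linop (scalar_linop (inverse q - q) * gen_linop j + 1) (delta w)"
    using quadratic_basis assms w by (simp add: apply_linop_simps gen_fun_smul)
next
  fix u :: "int list \<Rightarrow> 'k" assume "restrict_words u = 0"
  then show "apply_linop (gen_linop j * gen_linop j) u =
      apply_linop (scalar_linop (inverse q - q) * gen_linop j + 1) u"
    using q_nonzero assms
    by (simp add: off_words_simps; simp add: off_scalar_def smul_def fun_eq_iff field_simps)
qed

lemma gen_linop_braid:
  assumes "1 \<le> i" and "i + 1 < d"
  shows "gen_linop i * gen_linop (i + 1) * gen_linop i =
    gen_linop (i + 1) * gen_linop i * gen_linop (i + 1)"
proof (rule linop_eq_on_words)
  fix w assume w: "w \<in> W"
  then have "i - 1 + 3 \<le> length w"
    using assms by (simp add: words_def)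
  then obtain xs a b c ys where "w = xs @ a # b # c # ys" and "length xs = i - 1"
    by (rule split_word3)
  then show "apply_linop (gen_linop i * gen_linop (i + 1) * gen_linop i) (delta w) =
      apply_linop (gen_linop (i + 1) * gen_linop i * gen_linop (i + 1)) (delta w)"
    using braid_basis assms w by (simp add: apply_linop_simps)
next
  fix u :: "int list \<Rightarrow> 'k" assume "restrict_words u = 0"
  then show "apply_linop (gen_linop i * gen_linop (i + 1) * gen_linop i) u =
      apply_linop (gen_linop (i + 1) * gen_linop i * gen_linop (i + 1)) u"
    using assms by (simp add: off_words_simps off_scalar_def)
qed

lemma gen_linop_braid_0:
  assumes "1 < d"
  shows "gen_linop 0 * gen_linop 1 * gen_linop 0 * gen_linop 1 =
    gen_linop 1 * gen_linop 0 * gen_linop 1 * gen_linop 0"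
proof (rule linop_eq_on_words)
  fix w assume w: "w \<in> W"
  then have "0 + 2 \<le> length w"
    using assms by (simp add: words_def)
  then obtain xs a b zs where "w = xs @ a # b # zs" and "length xs = 0"
    by (rule split_word2)
  then show "apply_linop (gen_linop 0 * gen_linop 1 * gen_linop 0 * gen_linop 1) (delta w) =
      apply_linop (gen_linop 1 * gen_linop 0 * gen_linop 1 * gen_linop 0) (delta w)"
    using braid_0_basis w by (simp add: apply_linop_simps)
next
  fix u :: "int list \<Rightarrow> 'k" assume "restrict_words u = 0"
  then show "apply_linop (gen_linop 0 * gen_linop 1 * gen_linop 0 * gen_linop 1) u =
      apply_linop (gen_linop 1 * gen_linop 0 * gen_linop 1 * gen_linop 0) u"
    by (simp add: off_words_simps mult_ac)
qed

lemma gen_linop_far_commute: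
  assumes "i < d" and "j < d" and "i + 1 < j"
  shows "gen_linop i * gen_linop j = gen_linop j * gen_linop i"
proof (rule linop_eq_on_words)
  fix w assume w: "w \<in> W"
  show "apply_linop (gen_linop i * gen_linop j) (delta w) =
      apply_linop (gen_linop j * gen_linop i) (delta w)"
  proof (cases "i = 0")
    case True
    obtain a r where w_r: "w = a # r"
      using w d_pos by (cases w) (auto simp: words_def)
    then have "j - 2 + 2 \<le> length r"
      using assms w by (auto simp: words_def)
    then obtain ys c e zs where "r = ys @ c # e # zs" and "length ys = j - 2"
      by (rule split_word2)
    then show ?thesis
      using far_commute_0_basis[of ys j a c e zs] w w_r True assms by (simp add: apply_linop_simps)
  next
    case False
    then have "i - 1 + 2 \<le> j - 1" "j - 1 + 2 \<le> length w"
      using assms w by (auto simp: words_def)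
    then obtain xs a b ys c e zs where "w = xs @ a # b # ys @ c # e # zs"
      and "length xs = i - 1" and "length xs + length ys + 2 = j - 1"
      by (rule split_word_far)
    then show ?thesis
      using far_commute_basis[of i xs ys j a b c e zs] w False assms
      by (simp add: apply_linop_simps)
  qed
next
  fix u :: "int list \<Rightarrow> 'k" assume "restrict_words u = 0"
  then show "apply_linop (gen_linop i * gen_linop j) u = apply_linop (gen_linop j * gen_linop i) u"
    by (simp add: off_words_simps mult.commute)
qed

lemma hecke_B_action: "hecke_B_action gen_linop d Q q"
  by unfold_locales
    (rule Q_nonzero q_nonzero gen_linop_quadratic_0 gen_linop_quadratic gen_linop_braid
      gen_linop_braid_0 gen_linop_far_commute; assumption)+

lemma tensor_space_add: "u \<in> tensor_space n d \<Longrightarrow> v \<in> tensor_space n d \<Longrightarrow> u + v \<in> tensor_space n d"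
  and tensor_space_smul: "u \<in> tensor_space n d \<Longrightarrow> smul c u \<in> tensor_space n d"
  and delta_in_tensor_space: "w \<in> W \<Longrightarrow> delta w \<in> tensor_space n d"
  by (auto simp: tensor_space_def smul_def delta_apply)

lemma gen_basis_in_tensor_space:
  assumes w: "w \<in> W" and j: "j < d"
  shows "gen_basis Q q j w \<in> tensor_space n d"
proof (cases "j = 0")
  case True
  obtain a zs where "w = a # zs"
    using w d_pos by (cases w) (auto simp: words_def)
  moreover have "- a # zs \<in> W"
    using w calculation by (simp add: words_def)
  ultimately show ?thesis
    using True w
    by (auto simp: gen_basis_0 tensor_space_add tensor_space_smul delta_in_tensor_space)
next
  case False
  then have "j - 1 + 2 \<le> length w"
    using w j by (simp add: words_def)
  then obtain xs a b zs where "w = xs @ a # b # zs" and "length xs = j - 1"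
    by (rule split_word2)
  moreover have "xs @ b # a # zs \<in> W"
    using w calculation(1) by (auto simp: words_def)
  ultimately show ?thesis
    using False w
    by (auto simp: gen_basis_swap tensor_space_add tensor_space_smul delta_in_tensor_space)
qed

lemma gen_act_in_tensor_space: "j < d \<Longrightarrow> gen_act n d Q q j v \<in> tensor_space n d"
  using gen_basis_in_tensor_space by (simp add: gen_act_def tensor_space_def)

lemma apply_prod_gen_linop:
  assumes "v \<in> tensor_space n d" and "set js \<subseteq> {..<d}"
  shows "apply_linop (prod_list (map gen_linop js)) v = word_act n d Q q js v"
  using assms
proof (induction js arbitrary: v)
  case Nil
  then show ?case by (simp add: apply_linop_one word_act_def)
next
  case (Cons j js)
  have "restrict_words v = v"
    using Cons.prems(1) by (auto simp: tensor_space_def restrict_words_def)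
  then have "gen_fun j v = gen_act n d Q q j v"
    by (simp add: gen_fun_def)
  then show ?case
    using Cons.IH[of "gen_act n d Q q j v"] Cons.prems gen_act_in_tensor_space
    by (simp add: apply_linop_simps word_act_def)
qed

end

theorem corollary2p6:
  fixes Q q ev :: "'k::field" and v :: "int list \<Rightarrow> 'k" and n d :: nat
  assumes "Q \<noteq> 0" and "q \<noteq> 0" and "n \<ge> 1" and "d \<ge> 1"
    and "v \<in> tensor_space n d" and "\<exists>w. v w \<noteq> 0"
    and "cK_act n d Q q v = (\<lambda>u. ev * v u)"
  shows "\<exists>a b :: int. ev = Q powi a * q powi b \<or> ev = - (Q powi a * q powi b)"
proof -
  interpret tensor_rep n d Q q
    using assms by unfold_locales auto
  interpret hecke_B_action gen_linop d Q q
    by (rule hecke_B_action)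
  have "apply_linop cK v = cK_act n d Q q v"
    unfolding cK_eq_prod_cK_word cK_act_def
    using assms(5) set_cK_word by (rule apply_prod_gen_linop)
  then have "apply_linop cK v = smul ev v"
    using assms(7) by (simp add: smul_def)
  moreover have "v \<noteq> 0"
    using assms(6) by auto
  ultimately have "ev \<in> signed_monomials Q q"
    by (rule cK_eigenvalue)
  then show ?thesis
    unfolding signed_monomials_def by blast
qed

end
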